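(* Let $\hat G_0$ be an arbitrary $M$-mode Gaussian unitary and $\hat P(\boldsymbol\varphi)=e^{i\boldsymbol\varphi\cdot\hat{\boldsymbol n}}$ a phase shifter with $\boldsymbol\varphi=(\varphi_1,\dots,\varphi_L,0,\dots,0)$. Then $\hat G_0^\dagger\hat P(\boldsymbol\varphi)\hat G_0$ can be decomposed as $\hat U\hat S(\boldsymbol r)\hat V$, where $\hat U,\hat V$ are linear-optical unitaries and $\hat S(\boldsymbol r)=\bigotimes_{i=1}^M\hat S(r_i)$ is a product of single-mode squeezers with at most $2L$ nonzero squeezing parameters $r_i$.
   Context: $\hat{\boldsymbol n}=(\hat a_1^\dagger\hat a_1,\dots,\hat a_M^\dagger\hat a_M)$. A linear-optical unitary satisfies $\hat U^\dagger\hat a_i\hat U=\sum_j U_{ij}\hat a_j$ for a unitary matrix $U$. The single-mode squeezer satisfies $\hat S^\dagger(r)\hat a\hat S(r)=\cosh r\,\hat a+\sinh r\,\hat a^\dagger$. A Gaussian unitary is any unitary of the form $\hat U\hat S(\boldsymbol s)\hat V$ with $\hat U,\hat V$ linear-optical and $\boldsymbol s\in\mathbb R^M$ (Bloch–Messiah form). *)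

theory Defs
  imports Complex_Main "Jordan_Normal_Form.Matrix"
begin

text \<open>Gaussian unitaries on M modes are represented by their Bogoliubov (Heisenberg-picture)
  action: a pair (A,B) of M x M complex matrices encodes
  G^dagger a_i G = sum_j A_ij a_j + B_ij a_j^dagger.\<close>

type_synonym bogo = "complex mat \<times> complex mat"

definition cmat :: "complex mat \<Rightarrow> complex mat" where
  "cmat A = map_mat cnj A"

definition adj :: "complex mat \<Rightarrow> complex mat" where
  "adj A = cmat (transpose_mat A)"

definition unitary_mat :: "nat \<Rightarrow> complex mat \<Rightarrow> bool" where
  "unitary_mat M U \<longleftrightarrow> U \<in> carrier_mat M M \<and> U * adj U = 1\<^sub>m M \<and> adj U * U = 1\<^sub>m M"

text \<open>Operator product G1 G2: (G1 G2)^dagger a (G1 G2) = G2^dagger (G1^dagger a G1) G2.\<close>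
definition bogo_comp :: "bogo \<Rightarrow> bogo \<Rightarrow> bogo" where
  "bogo_comp G1 G2 = (case G1 of (A1, B1) \<Rightarrow> case G2 of (A2, B2) \<Rightarrow>
     (A1 * A2 + B1 * cmat B2, A1 * B2 + B1 * cmat A2))"

definition bogo_adj :: "bogo \<Rightarrow> bogo" where
  "bogo_adj G = (case G of (A, B) \<Rightarrow> (adj A, - transpose_mat B))"

definition lin_opt :: "nat \<Rightarrow> complex mat \<Rightarrow> bogo" where
  "lin_opt M U = (U, 0\<^sub>m M M)"

definition squeezer :: "nat \<Rightarrow> (nat \<Rightarrow> real) \<Rightarrow> bogo" where
  "squeezer M r = (mat M M (\<lambda>(i, j). if i = j then complex_of_real (cosh (r i)) else 0),
                   mat M M (\<lambda>(i, j). if i = j then complex_of_real (sinh (r i)) else 0))"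

text \<open>Phase shifter P(phi) = exp(i phi . n): P^dagger a_j P = e^{i phi_j} a_j.\<close>
definition phase_shifter :: "nat \<Rightarrow> (nat \<Rightarrow> real) \<Rightarrow> bogo" where
  "phase_shifter M \<phi> = (mat M M (\<lambda>(i, j). if i = j then cis (\<phi> i) else 0), 0\<^sub>m M M)"

definition gaussian :: "nat \<Rightarrow> bogo \<Rightarrow> bool" where
  "gaussian M G \<longleftrightarrow> (\<exists>U V s. unitary_mat M U \<and> unitary_mat M V \<and>
      G = bogo_comp (lin_opt M U) (bogo_comp (squeezer M s) (lin_opt M V)))"

end

theory Submission
  imports Defs "Jordan_Normal_Form.Spectral_Radius"
begin

(* A Gaussian unitary acts on the modes by a Bogoliubov transformation (A, B), and conversely
   every Bogoliubov transformation has a Bloch-Messiah decomposition U S(r) V: if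
   A^-1 B = W diag(sigma) W^T is a Takagi factorization, then tanh r_i = sigma_i. Hence
   r_i <> 0 exactly for the nonzero singular values of B, and the number of nonzero squeezing
   parameters is at most the rank of B.
   For K = G0^dagger P G0 the B-part is linear in P - 1, since it vanishes for P = 1: it is
   A0^dagger (P - 1) B0 - B0^T conj(P - 1) conj(A0). As P - 1 is diagonal with at most L
   nonzero entries, B has rank at most 2L. *)

lemma dim_cmat[simp]: "dim_row (cmat A) = dim_row A" "dim_col (cmat A) = dim_col A"
  by (auto simp: cmat_def)

lemma dim_adj[simp]: "dim_row (adj A) = dim_col A" "dim_col (adj A) = dim_row A"
  by (auto simp: adj_def)

lemma index_cmat[simp]: "i < dim_row A \<Longrightarrow> j < dim_col A \<Longrightarrow> cmat A $$ (i,j) = cnj (A $$ (i,j))"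
  by (auto simp: cmat_def)

lemma index_adj[simp]: "i < dim_col A \<Longrightarrow> j < dim_row A \<Longrightarrow> adj A $$ (i,j) = cnj (A $$ (j,i))"
  by (auto simp: adj_def)

lemma cmat_carrier_iff[simp]: "cmat A \<in> carrier_mat n m \<longleftrightarrow> A \<in> carrier_mat n m"
  unfolding carrier_mat_def by simp

lemma adj_carrier_iff[simp]: "adj A \<in> carrier_mat n m \<longleftrightarrow> A \<in> carrier_mat m n"
  unfolding carrier_mat_def by auto

lemma cmat_mult: "A \<in> carrier_mat n k \<Longrightarrow> B \<in> carrier_mat k m \<Longrightarrow> cmat (A * B) = cmat A * cmat B"
  by (rule eq_matI) (auto simp: scalar_prod_def sum_conjugate cmat_def)

lemma adj_mult: "A \<in> carrier_mat n k \<Longrightarrow> B \<in> carrier_mat k m \<Longrightarrow> adj (A * B) = adj B * adj A"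
  by (rule eq_matI) (auto simp: scalar_prod_def adj_def ac_simps intro!: sum.cong)

lemma cmat_add: "A \<in> carrier_mat n m \<Longrightarrow> B \<in> carrier_mat n m \<Longrightarrow> cmat (A + B) = cmat A + cmat B"
  by (rule eq_matI) (auto simp: cmat_def)

lemma adj_add: "A \<in> carrier_mat n m \<Longrightarrow> B \<in> carrier_mat n m \<Longrightarrow> adj (A + B) = adj A + adj B"
  by (rule eq_matI) (auto simp: adj_def)

lemma cmat_minus: "A \<in> carrier_mat n m \<Longrightarrow> B \<in> carrier_mat n m \<Longrightarrow> cmat (A - B) = cmat A - cmat B"
  by (rule eq_matI) (auto simp: cmat_def)

lemma adj_minus: "A \<in> carrier_mat n m \<Longrightarrow> B \<in> carrier_mat n m \<Longrightarrow> adj (A - B) = adj A - adj B"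
  by (rule eq_matI) (auto simp: adj_def)

lemma cmat_one[simp]: "cmat (1\<^sub>m n) = 1\<^sub>m n"
  by (rule eq_matI) (auto simp: cmat_def)

lemma adj_one[simp]: "adj (1\<^sub>m n) = 1\<^sub>m n"
  by (rule eq_matI) (auto simp: adj_def)

lemma cmat_zero[simp]: "cmat (0\<^sub>m n m) = 0\<^sub>m n m"
  by (rule eq_matI) (auto simp: cmat_def)

lemma adj_adj[simp]: "adj (adj A) = A"
  by (rule eq_matI) (auto simp: adj_def cmat_def)

lemma cmat_transpose: "cmat (transpose_mat A) = adj A"
  by (simp add: adj_def)

lemma transpose_cmat: "transpose_mat (cmat A) = adj A"
  by (rule eq_matI) (auto simp: adj_def cmat_def)

lemma cmat_adj: "cmat (adj A) = transpose_mat A"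
  by (rule eq_matI) (auto simp: adj_def cmat_def)

lemma transpose_adj: "transpose_mat (adj A) = cmat A"
  by (rule eq_matI) (auto simp: adj_def cmat_def)

lemma adj_cmat: "adj (cmat A) = transpose_mat A"
  by (rule eq_matI) (auto simp: adj_def cmat_def)

lemma adj_transpose: "adj (transpose_mat A) = cmat A"
  by (rule eq_matI) (auto simp: adj_def cmat_def)

lemmas conj_transpose_simps = cmat_transpose transpose_cmat cmat_adj transpose_adj adj_cmat adj_transpose

text \<open>The ring laws for square matrices, with the inner dimensions fixed to \<open>n\<close> so that
  the simplifier can discharge the carrier premises; use as \<open>square_mat_simps[where n = n]\<close>.\<close>

lemma square_mat_simps:
  fixes A B C :: "complex mat"
  shows "A \<in> carrier_mat n n \<Longrightarrow> B \<in> carrier_mat n n \<Longrightarrow> A * B \<in> carrier_mat n n"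
    and "A \<in> carrier_mat n n \<Longrightarrow> B \<in> carrier_mat n n \<Longrightarrow> A + B \<in> carrier_mat n n"
    and "A \<in> carrier_mat n n \<Longrightarrow> B \<in> carrier_mat n n \<Longrightarrow> A - B \<in> carrier_mat n n"
    and "A \<in> carrier_mat n n \<Longrightarrow> B \<in> carrier_mat n n \<Longrightarrow> cmat (A * B) = cmat A * cmat B"
    and "A \<in> carrier_mat n n \<Longrightarrow> B \<in> carrier_mat n n \<Longrightarrow> adj (A * B) = adj B * adj A"
    and "A \<in> carrier_mat n n \<Longrightarrow> B \<in> carrier_mat n n \<Longrightarrow> transpose_mat (A * B) = transpose_mat B * transpose_mat A"
    and "A \<in> carrier_mat n n \<Longrightarrow> B \<in> carrier_mat n n \<Longrightarrow> cmat (A + B) = cmat A + cmat B"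
    and "A \<in> carrier_mat n n \<Longrightarrow> B \<in> carrier_mat n n \<Longrightarrow> adj (A + B) = adj A + adj B"
    and "A \<in> carrier_mat n n \<Longrightarrow> B \<in> carrier_mat n n \<Longrightarrow> transpose_mat (A + B) = transpose_mat A + transpose_mat B"
    and "A \<in> carrier_mat n n \<Longrightarrow> B \<in> carrier_mat n n \<Longrightarrow> cmat (A - B) = cmat A - cmat B"
    and "A \<in> carrier_mat n n \<Longrightarrow> B \<in> carrier_mat n n \<Longrightarrow> adj (A - B) = adj A - adj B"
    and "A \<in> carrier_mat n n \<Longrightarrow> B \<in> carrier_mat n n \<Longrightarrow> transpose_mat (A - B) = transpose_mat A - transpose_mat B"
    and "A \<in> carrier_mat n n \<Longrightarrow> B \<in> carrier_mat n n \<Longrightarrow> C \<in> carrier_mat n n \<Longrightarrow> (A + B) * C = A * C + B * C"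
    and "A \<in> carrier_mat n n \<Longrightarrow> B \<in> carrier_mat n n \<Longrightarrow> C \<in> carrier_mat n n \<Longrightarrow> A * (B + C) = A * B + A * C"
    and "A \<in> carrier_mat n n \<Longrightarrow> B \<in> carrier_mat n n \<Longrightarrow> C \<in> carrier_mat n n \<Longrightarrow> (A - B) * C = A * C - B * C"
    and "A \<in> carrier_mat n n \<Longrightarrow> B \<in> carrier_mat n n \<Longrightarrow> C \<in> carrier_mat n n \<Longrightarrow> A * (B - C) = A * B - A * C"
    and "A \<in> carrier_mat n n \<Longrightarrow> B \<in> carrier_mat n n \<Longrightarrow> C \<in> carrier_mat n n \<Longrightarrow> A * B * C = A * (B * C)"
    and "A \<in> carrier_mat n n \<Longrightarrow> A * 1\<^sub>m n = A"
    and "A \<in> carrier_mat n n \<Longrightarrow> 1\<^sub>m n * A = A"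
  by (simp_all add: cmat_mult[of _ n n _ n] adj_mult[of _ n n _ n] transpose_mult[of _ n n _ n]
      minus_carrier_mat cmat_add adj_add transpose_add cmat_minus adj_minus transpose_minus
      add_mult_distrib_mat[where nr=n and n=n and nc=n] mult_add_distrib_mat[where nr=n and n=n and nc=n]
      minus_mult_distrib_mat[where nr=n and n=n and nc=n] mult_minus_distrib_mat[where nr=n and n=n and nc=n]
      assoc_mult_mat[where n\<^sub>1=n and n\<^sub>2=n and n\<^sub>3=n and n\<^sub>4=n])

lemma index_mult_mat_sum:
  assumes "A \<in> carrier_mat n k" "B \<in> carrier_mat k m" "i < n" "j < m"
  shows "(A * B) $$ (i,j) = (\<Sum>l<k. A $$ (i,l) * B $$ (l,j))"
  using assms by (auto simp: scalar_prod_def atLeast0LessThan intro!: sum.cong)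

lemma index_mult_mat_vec_sum:
  assumes "A \<in> carrier_mat n m" "v \<in> carrier_vec m" "i < n"
  shows "(A *\<^sub>v v) $ i = (\<Sum>j<m. A $$ (i,j) * v $ j)"
  using assms by (auto simp: scalar_prod_def atLeast0LessThan intro!: sum.cong)

lemma mult_left_inverse_cancel:
  fixes A B C :: "complex mat"
  assumes "A * B = 1\<^sub>m n" "A \<in> carrier_mat n n" "B \<in> carrier_mat n n" "C \<in> carrier_mat n m"
  shows "A * (B * C) = C"
  using assoc_mult_mat[OF assms(2,3,4)] assms(1,4) by simp

lemma index_mat_diag[simp]:
  "i < n \<Longrightarrow> j < n \<Longrightarrow> mat_diag n f $$ (i,j) = (if i = j then f i else 0)"
  by (simp add: mat_diag_def)

lemma dim_mat_diag[simp]: "dim_row (mat_diag n f) = n" "dim_col (mat_diag n f) = n"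
  by (simp_all add: mat_diag_def)

lemma index_mult_mat_diag:
  "A \<in> carrier_mat m n \<Longrightarrow> i < m \<Longrightarrow> j < n \<Longrightarrow> (A * mat_diag n f) $$ (i,j) = A $$ (i,j) * f j"
  by (simp add: mat_diag_mult_right)

lemma index_mat_diag_mult:
  "A \<in> carrier_mat n m \<Longrightarrow> i < n \<Longrightarrow> j < m \<Longrightarrow> (mat_diag n f * A) $$ (i,j) = f i * A $$ (i,j)"
  by (simp add: mat_diag_mult_left)

lemma index_mat_diag_sandwich:
  assumes "A \<in> carrier_mat m n" "B \<in> carrier_mat p n" "i < m" "j < p"
  shows "(A * mat_diag n f * transpose_mat B) $$ (i,j) = (\<Sum>k<n. A $$ (i,k) * f k * B $$ (j,k))"
  using assms by (simp add: mat_diag_mult_right scalar_prod_def atLeast0LessThan)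

lemma mat_diag_cong: "(\<And>i. i < n \<Longrightarrow> f i = g i) \<Longrightarrow> mat_diag n f = mat_diag n g"
  by (rule eq_matI) auto

lemma one_minus_mat_diag: "1\<^sub>m n - mat_diag n f = mat_diag n (\<lambda>i. 1 - f i :: 'a :: ring_1)"
  by (rule eq_matI) auto

lemma mat_diag_minus_one: "mat_diag n f - 1\<^sub>m n = mat_diag n (\<lambda>i. f i - 1 :: 'a :: ring_1)"
  by (rule eq_matI) auto

lemma mat_diag_uminus: "mat_diag n (\<lambda>i. - f i :: 'a :: ring_1) = - mat_diag n f"
  by (rule eq_matI) auto

lemma cmat_mat_diag[simp]: "cmat (mat_diag n f) = mat_diag n (\<lambda>i. cnj (f i))"
  by (rule eq_matI) auto

lemma adj_mat_diag[simp]: "adj (mat_diag n f) = mat_diag n (\<lambda>i. cnj (f i))"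
  by (rule eq_matI) auto

lemma transpose_mat_diag[simp]: "transpose_mat (mat_diag n f) = mat_diag n f"
  by (rule eq_matI) auto

lemma unitary_matD:
  assumes "unitary_mat n U"
  shows "U \<in> carrier_mat n n" "U * adj U = 1\<^sub>m n" "adj U * U = 1\<^sub>m n"
  using assms by (auto simp: unitary_mat_def)

lemma unitary_matI:
  assumes "U \<in> carrier_mat n n" "adj U * U = 1\<^sub>m n"
  shows "unitary_mat n U"
  using assms mat_mult_left_right_inverse[of "adj U" n U] by (auto simp: unitary_mat_def)

lemma unitary_cmat_transpose:
  assumes "unitary_mat n U"
  shows "cmat U * transpose_mat U = 1\<^sub>m n" "transpose_mat U * cmat U = 1\<^sub>m n"
  using arg_cong[OF unitary_matD(2)[OF assms], of cmat] arg_cong[OF unitary_matD(3)[OF assms], of cmat]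
    unitary_matD(1)[OF assms]
  by (simp_all add: cmat_mult[of _ n n _ n] cmat_adj)

lemma unitary_one: "unitary_mat n (1\<^sub>m n)"
  by (simp add: unitary_mat_def)

lemma unitary_adj: "unitary_mat n U \<Longrightarrow> unitary_mat n (adj U)"
  by (auto simp: unitary_mat_def)

lemma unitary_mult:
  assumes U: "unitary_mat n U" and V: "unitary_mat n V"
  shows "unitary_mat n (U * V)"
proof (rule unitary_matI)
  note u = unitary_matD[OF U] and v = unitary_matD[OF V]
  show "U * V \<in> carrier_mat n n" using u v by auto
  have "adj (U * V) * (U * V) = adj V * ((adj U * U) * V)"
    using u v by (simp add: square_mat_simps[where n=n] mult_left_inverse_cancel[of "adj U" U n])
  thus "adj (U * V) * (U * V) = 1\<^sub>m n" using u v by (simp add: square_mat_simps[where n=n])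
qed

lemma unitary_mat_diag:
  assumes "\<And>i. i < n \<Longrightarrow> cnj (f i) * f i = 1"
  shows "unitary_mat n (mat_diag n f)"
  by (rule unitary_matI) (simp_all add: assms mat_diag_cong[of n _ "\<lambda>_. 1"])

section \<open>Takagi factorization\<close>

lemma cscalar_prod_sum:
  fixes v w :: "complex vec"
  assumes "v \<in> carrier_vec n" "w \<in> carrier_vec n"
  shows "v \<bullet>c w = (\<Sum>i<n. v $ i * cnj (w $ i))"
  using assms by (auto simp: scalar_prod_def atLeast0LessThan)

lemma cscalar_prod_adj:
  fixes A :: "complex mat"
  assumes A: "A \<in> carrier_mat n n" and a: "a \<in> carrier_vec n" and y: "y \<in> carrier_vec n"
  shows "(A *\<^sub>v a) \<bullet>c y = a \<bullet>c (adj A *\<^sub>v y)"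
proof -
  have "(A *\<^sub>v a) \<bullet>c y = (\<Sum>i<n. \<Sum>j<n. A $$ (i,j) * a $ j * cnj (y $ i))"
    using assms by (simp add: cscalar_prod_sum[of _ n] index_mult_mat_vec_sum[of _ n n]
        sum_distrib_right del: index_mult_mat_vec)
  also have "\<dots> = (\<Sum>j<n. \<Sum>i<n. A $$ (i,j) * a $ j * cnj (y $ i))"
    by (rule sum.swap)
  also have "\<dots> = (\<Sum>j<n. a $ j * cnj (\<Sum>i<n. adj A $$ (j,i) * y $ i))"
    using A by (auto simp: sum_distrib_left ac_simps intro!: sum.cong)
  also have "\<dots> = a \<bullet>c (adj A *\<^sub>v y)"
    using assms by (simp add: cscalar_prod_sum[of _ n] index_mult_mat_vec_sum[of _ n n]
        del: index_mult_mat_vec)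
  finally show ?thesis .
qed

lemma conjugate_mult_mat_vec:
  fixes A :: "complex mat"
  assumes "A \<in> carrier_mat n m" "v \<in> carrier_vec m"
  shows "conjugate (A *\<^sub>v v) = cmat A *\<^sub>v conjugate v"
  by (rule eq_vecI)
    (use assms in \<open>auto simp: index_mult_mat_vec_sum[of _ n m] simp del: index_mult_mat_vec\<close>)

lemma cscalar_prod_self_pos:
  fixes w :: "complex vec"
  assumes "w \<in> carrier_vec n" "w \<noteq> 0\<^sub>v n"
  obtains t where "t > 0" "w \<bullet>c w = complex_of_real t"
proof -
  have "w \<bullet>c w > 0" using assms by simp
  thus ?thesis using that[of "Re (w \<bullet>c w)"] by (auto simp: less_complex_def complex_eq_iff)
qed

definition inv_norm :: "complex vec \<Rightarrow> complex" where
  "inv_norm w = complex_of_real (1 / sqrt (Re (w \<bullet>c w)))"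

lemma cnj_inv_norm[simp]: "cnj (inv_norm w) = inv_norm w"
  by (simp add: inv_norm_def)

lemma inv_norm_normalizes:
  assumes "w \<in> carrier_vec n" "w \<noteq> 0\<^sub>v n"
  shows "inv_norm w * inv_norm w * (w \<bullet>c w) = 1"
proof -
  obtain t where t: "t > 0" "w \<bullet>c w = complex_of_real t"
    using cscalar_prod_self_pos[OF assms] .
  have "inv_norm w = complex_of_real (1 / sqrt t)" using t by (simp add: inv_norm_def)
  hence "inv_norm w * inv_norm w * (w \<bullet>c w) = complex_of_real ((1 / sqrt t) * (1 / sqrt t) * t)"
    using t by (simp only: of_real_mult)
  also have "(1 / sqrt t) * (1 / sqrt t) * t = 1"
    using t by (simp add: field_simps)
  finally show ?thesis by simp
qed

lemma unitary_normalized_cols: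
  fixes ws :: "complex vec list"
  assumes ws: "set ws \<subseteq> carrier_vec n" "corthogonal ws" "length ws = n"
  shows "unitary_mat n (mat_of_cols n (map (\<lambda>w. inv_norm w \<cdot>\<^sub>v w) ws))"
    (is "unitary_mat n ?Q")
proof (rule unitary_matI)
  have wsi: "ws ! i \<in> carrier_vec n" if "i < n" for i using ws that by auto
  have wsnz: "ws ! i \<noteq> 0\<^sub>v n" if "i < n" for i
    using corthogonalD[OF ws(2), of i i] that ws(3) by auto
  show Qc: "?Q \<in> carrier_mat n n" using ws by auto
  have Qij: "?Q $$ (i,j) = inv_norm (ws ! j) * (ws ! j $ i)" if "i < n" "j < n" for i j
    using that ws wsi[of j] by (simp add: mat_of_cols_index)
  show "adj ?Q * ?Q = 1\<^sub>m n"
  proof (rule eq_matI)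
    fix i j assume "i < dim_row (1\<^sub>m n)" "j < dim_col (1\<^sub>m n)"
    hence ij: "i < n" "j < n" by auto
    have "(adj ?Q * ?Q) $$ (i,j)
        = (\<Sum>k<n. inv_norm (ws ! i) * inv_norm (ws ! j) * ((ws ! j $ k) * cnj (ws ! i $ k)))"
      using Qc ij by (auto simp: index_mult_mat_sum[of _ n n _ n] Qij simp del: index_mult_mat
          intro!: sum.cong)
    also have "\<dots> = inv_norm (ws ! i) * inv_norm (ws ! j) * (ws ! j \<bullet>c ws ! i)"
      using wsi[OF ij(1)] wsi[OF ij(2)] by (simp add: cscalar_prod_sum[of _ n] sum_distrib_left)
    also have "\<dots> = 1\<^sub>m n $$ (i,j)"
      using inv_norm_normalizes[OF wsi wsnz, of i] corthogonalD[OF ws(2), of j i] ij ws(3)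
      by (cases "i = j") auto
    finally show "(adj ?Q * ?Q) $$ (i,j) = 1\<^sub>m n $$ (i,j)" .
  qed (use Qc in auto)
qed

lemma unitary_with_first_column:
  fixes x :: "complex vec"
  assumes x: "x \<in> carrier_vec n" and nx: "x \<bullet>c x = 1"
  obtains Q where "unitary_mat n Q" "\<And>i. i < n \<Longrightarrow> Q $$ (i,0) = x $ i"
proof -
  have x0: "x \<noteq> 0\<^sub>v n" using nx x by auto
  interpret cof_vec_space n "TYPE(complex)" .
  define b where "b = basis_completion x"
  from basis_completion[OF x x0, folded b_def]
  have dist_b: "distinct b" and indep: "\<not> lin_dep (set b)" and bc: "set b \<subseteq> carrier_vec n"
    and hdb: "hd b = x" and len_b: "length b = n" by auto
  have n0: "n > 0" using x0 x by (cases n) auto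
  from hdb len_b n0 obtain vs where bv: "b = x # vs" by (cases b) auto
  define ws where "ws = gram_schmidt n b"
  from gram_schmidt_result[OF bc dist_b indep refl, folded ws_def]
  have ws: "set ws \<subseteq> carrier_vec n" "corthogonal ws" "length ws = n" by (auto simp: len_b)
  have "hd ws = x" unfolding ws_def bv using x by simp
  hence "ws ! 0 = x" using ws(3) n0 by (cases ws) auto
  moreover have "inv_norm x = 1" using nx by (simp add: inv_norm_def)
  ultimately show ?thesis
    using unitary_normalized_cols[OF ws] ws n0 x
    by (intro that[of "mat_of_cols n (map (\<lambda>w. inv_norm w \<cdot>\<^sub>v w) ws)"])
      (simp_all add: mat_of_cols_index)
qed

lemma eigenvalue_gram_nonneg:
  fixes A :: "complex mat"
  assumes A: "A \<in> carrier_mat n n" and ev: "eigenvector (A * adj A) y \<mu>"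
  obtains t where "t \<ge> 0" "\<mu> = complex_of_real t"
proof -
  have y: "y \<in> carrier_vec n" "y \<noteq> 0\<^sub>v n" "(A * adj A) *\<^sub>v y = \<mu> \<cdot>\<^sub>v y"
    using ev A unfolding eigenvector_def by auto
  define w where "w = adj A *\<^sub>v y"
  have "\<mu> * (y \<bullet>c y) = (A *\<^sub>v w) \<bullet>c y"
    using y A by (simp add: w_def mult_mat_vec[of _ n n])
  also have "\<dots> = w \<bullet>c w"
    using cscalar_prod_adj[OF A _ y(1), of w] A y by (simp add: w_def)
  finally have eq: "\<mu> * (y \<bullet>c y) = w \<bullet>c w" .
  obtain s where s: "s > 0" "y \<bullet>c y = complex_of_real s" using cscalar_prod_self_pos[OF y(1,2)] .
  have "w \<bullet>c w \<ge> 0" by auto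
  then obtain u where u: "u \<ge> 0" "w \<bullet>c w = complex_of_real u"
    by (auto simp: less_eq_complex_def complex_eq_iff intro: that)
  have "\<mu> = complex_of_real (u / s)"
    using eq s u by (simp add: field_simps)
  thus ?thesis using s u by (intro that[of "u / s"]) auto
qed

text \<open>The coneigenvector is \<open>Z (conjugate y) + \<sigma> y\<close>, or \<open>\<i> y\<close> if that vanishes.\<close>

lemma coneigenvector_of_eigenvector:
  fixes Z :: "complex mat"
  assumes Z: "Z \<in> carrier_mat n n" and y: "y \<in> carrier_vec n" "y \<noteq> 0\<^sub>v n"
    and ev: "(Z * cmat Z) *\<^sub>v y = complex_of_real (\<sigma> * \<sigma>) \<cdot>\<^sub>v y"
  obtains x where "x \<in> carrier_vec n" "x \<noteq> 0\<^sub>v n" "Z *\<^sub>v conjugate x = complex_of_real \<sigma> \<cdot>\<^sub>v x"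
proof -
  define u where "u = Z *\<^sub>v conjugate y"
  define x where "x = u + complex_of_real \<sigma> \<cdot>\<^sub>v y"
  have u: "u \<in> carrier_vec n" using Z y unfolding u_def by simp
  have Zcu: "Z *\<^sub>v conjugate u = complex_of_real (\<sigma> * \<sigma>) \<cdot>\<^sub>v y"
    using ev Z y by (simp add: u_def conjugate_mult_mat_vec[OF Z] mult_mat_vec[of _ n n]
        assoc_mult_mat_vec[of _ n n _ n])
  have "Z *\<^sub>v conjugate x = Z *\<^sub>v conjugate u + complex_of_real \<sigma> \<cdot>\<^sub>v u"
    using Z u y by (simp add: x_def u_def conjugate_add_vec[of _ n] conjugate_smult_vec
        mult_add_distrib_mat_vec[of _ n n] mult_mat_vec[of _ n n])
  also have "\<dots> = complex_of_real \<sigma> \<cdot>\<^sub>v x"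
    unfolding Zcu x_def using u y by (intro eq_vecI) (auto simp: algebra_simps)
  finally have xev: "Z *\<^sub>v conjugate x = complex_of_real \<sigma> \<cdot>\<^sub>v x" .
  show ?thesis
  proof (cases "x = 0\<^sub>v n")
    case False
    with xev u y show ?thesis by (intro that[of x]) (auto simp: x_def)
  next
    case True
    hence uy: "u = - (complex_of_real \<sigma> \<cdot>\<^sub>v y)"
      using u y unfolding x_def by (intro eq_vecI) (auto simp: vec_eq_iff eq_neg_iff_add_eq_0)
    have "Z *\<^sub>v conjugate (\<i> \<cdot>\<^sub>v y) = (- \<i>) \<cdot>\<^sub>v u"
      using Z y by (simp add: u_def conjugate_smult_vec mult_mat_vec[of _ n n])
    also have "\<dots> = complex_of_real \<sigma> \<cdot>\<^sub>v (\<i> \<cdot>\<^sub>v y)"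
      unfolding uy using y by (intro eq_vecI) auto
    finally show ?thesis
      using that[of "\<i> \<cdot>\<^sub>v y"] y by (auto simp: vec_eq_iff)
  qed
qed

lemma symmetric_mat_coneigenvector:
  fixes Z :: "complex mat"
  assumes Z: "Z \<in> carrier_mat n n" and n: "0 < n" and sym: "transpose_mat Z = Z"
  obtains x \<sigma> where "x \<in> carrier_vec n" "x \<bullet>c x = 1" "\<sigma> \<ge> 0"
    "Z *\<^sub>v conjugate x = complex_of_real \<sigma> \<cdot>\<^sub>v x"
proof -
  have N: "Z * cmat Z = Z * adj Z" using sym by (simp add: adj_def)
  obtain \<mu> where "\<mu> \<in> spectrum (Z * cmat Z)" using spectrum_non_empty[of _ n] Z n by fastforce
  then obtain y where ev: "eigenvector (Z * adj Z) y \<mu>"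
    unfolding spectrum_def eigenvalue_def N by auto
  obtain t where t: "t \<ge> 0" "\<mu> = complex_of_real t" using eigenvalue_gram_nonneg[OF Z ev] .
  have y: "y \<in> carrier_vec n" "y \<noteq> 0\<^sub>v n" "(Z * cmat Z) *\<^sub>v y = complex_of_real (sqrt t * sqrt t) \<cdot>\<^sub>v y"
    using ev Z t N unfolding eigenvector_def by auto
  obtain x where x: "x \<in> carrier_vec n" "x \<noteq> 0\<^sub>v n"
    "Z *\<^sub>v conjugate x = complex_of_real (sqrt t) \<cdot>\<^sub>v x"
    using coneigenvector_of_eigenvector[OF Z y] .
  have "Z *\<^sub>v conjugate (inv_norm x \<cdot>\<^sub>v x) = complex_of_real (sqrt t) \<cdot>\<^sub>v (inv_norm x \<cdot>\<^sub>v x)"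
    using Z x by (simp add: conjugate_smult_vec mult_mat_vec[of _ n n] smult_smult_assoc mult.commute)
  moreover have "(inv_norm x \<cdot>\<^sub>v x) \<bullet>c (inv_norm x \<cdot>\<^sub>v x) = 1"
    using inv_norm_normalizes[OF x(1,2)] x(1) by (simp add: conjugate_smult_vec ac_simps)
  ultimately show ?thesis using that[of "inv_norm x \<cdot>\<^sub>v x" "sqrt t"] x t by simp
qed

lemma takagi_deflation:
  fixes Z Q :: "complex mat"
  assumes Z: "Z \<in> carrier_mat n n" and Q: "unitary_mat n Q" and i: "i < n"
    and x: "x \<in> carrier_vec n" "\<And>k. k < n \<Longrightarrow> Q $$ (k,0) = x $ k"
    and ev: "Z *\<^sub>v conjugate x = c \<cdot>\<^sub>v x"
  shows "(adj Q * Z * cmat Q) $$ (i,0) = (if i = 0 then c else 0)"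
proof -
  note q = unitary_matD[OF Q]
  have n: "0 < n" using i by simp
  have ZcQ: "(Z * cmat Q) $$ (k,0) = c * Q $$ (k,0)" if k: "k < n" for k
  proof -
    have "(Z * cmat Q) $$ (k,0) = (\<Sum>l<n. Z $$ (k,l) * conjugate x $ l)"
      using Z q x k n by (auto simp: index_mult_mat_sum[of _ n n _ n] simp del: index_mult_mat
          intro!: sum.cong)
    also have "\<dots> = (Z *\<^sub>v conjugate x) $ k"
      using Z x k by (simp add: index_mult_mat_vec_sum[of _ n n] del: index_mult_mat_vec)
    also have "\<dots> = c * Q $$ (k,0)"
      unfolding ev using x k by (simp add: x(2))
    finally show ?thesis .
  qed
  have "(adj Q * Z * cmat Q) $$ (i,0) = (\<Sum>k<n. adj Q $$ (i,k) * (Z * cmat Q) $$ (k,0))"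
    using Z q i n by (simp add: index_mult_mat_sum[of _ n n _ n] square_mat_simps[where n=n]
        del: index_mult_mat)
  also have "\<dots> = c * (\<Sum>k<n. adj Q $$ (i,k) * Q $$ (k,0))"
    by (simp add: ZcQ sum_distrib_left ac_simps)
  also have "(\<Sum>k<n. adj Q $$ (i,k) * Q $$ (k,0)) = (adj Q * Q) $$ (i,0)"
    using q(1) i n by (simp add: index_mult_mat_sum[of _ n n _ n] del: index_mult_mat)
  finally show ?thesis using q i n by simp
qed

definition block_diag_one :: "complex mat \<Rightarrow> complex mat" where
  "block_diag_one W = mat (Suc (dim_row W)) (Suc (dim_col W))
     (\<lambda>(i, j). if i = 0 \<and> j = 0 then 1 else if i = 0 \<or> j = 0 then 0 else W $$ (i - 1, j - 1))"

lemma dim_block_diag_one[simp]: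
  "dim_row (block_diag_one W) = Suc (dim_row W)" "dim_col (block_diag_one W) = Suc (dim_col W)"
  by (simp_all add: block_diag_one_def)

lemma block_diag_one_carrier[simp]:
  "W \<in> carrier_mat n n \<Longrightarrow> block_diag_one W \<in> carrier_mat (Suc n) (Suc n)"
  by (simp add: block_diag_one_def)

lemma index_block_diag_one:
  assumes "W \<in> carrier_mat n n"
  shows "j < Suc n \<Longrightarrow> block_diag_one W $$ (0,j) = (if j = 0 then 1 else 0)"
    and "i < Suc n \<Longrightarrow> block_diag_one W $$ (i,0) = (if i = 0 then 1 else 0)"
    and "i < n \<Longrightarrow> j < n \<Longrightarrow> block_diag_one W $$ (Suc i, Suc j) = W $$ (i,j)"
  using assms by (auto simp: block_diag_one_def)

lemma unitary_block_diag_one: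
  assumes W: "unitary_mat n W"
  shows "unitary_mat (Suc n) (block_diag_one W)"
proof (rule unitary_matI)
  note w = unitary_matD[OF W]
  let ?P = "block_diag_one W"
  note P = index_block_diag_one[OF w(1)]
  show Pc: "?P \<in> carrier_mat (Suc n) (Suc n)" using w by simp
  show "adj ?P * ?P = 1\<^sub>m (Suc n)"
  proof (rule eq_matI)
    fix i j assume "i < dim_row (1\<^sub>m (Suc n))" "j < dim_col (1\<^sub>m (Suc n))"
    hence ij: "i < Suc n" "j < Suc n" by auto
    have "(adj ?P * ?P) $$ (i,j) = (\<Sum>k<Suc n. cnj (?P $$ (k,i)) * ?P $$ (k,j))"
      using w(1) ij by (simp add: index_mult_mat_sum[of _ "Suc n" "Suc n" _ "Suc n"] del: index_mult_mat)
    also have "\<dots> = cnj (?P $$ (0,i)) * ?P $$ (0,j) + (\<Sum>k<n. cnj (?P $$ (Suc k,i)) * ?P $$ (Suc k,j))"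
      by (rule sum.lessThan_Suc_shift)
    also have "\<dots> = 1\<^sub>m (Suc n) $$ (i,j)"
    proof (cases i; cases j)
      fix i' j' assume ij': "i = Suc i'" "j = Suc j'"
      have "(\<Sum>k<n. cnj (?P $$ (Suc k,i)) * ?P $$ (Suc k,j)) = (adj W * W) $$ (i',j')"
        using w(1) ij ij' by (simp add: P index_mult_mat_sum[of _ n n _ n] del: index_mult_mat)
      thus ?thesis using w ij ij' P by simp
    qed (use ij P in auto)
    finally show "(adj ?P * ?P) $$ (i,j) = 1\<^sub>m (Suc n) $$ (i,j)" .
  qed (use Pc in auto)
qed

lemma block_diag_one_sandwich:
  fixes Z W :: "complex mat"
  assumes W: "W \<in> carrier_mat n n" and Z: "Z \<in> carrier_mat (Suc n) (Suc n)"
    and row0: "\<And>j. j < Suc n \<Longrightarrow> Z $$ (0,j) = (if j = 0 then g 0 else 0)"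
    and col0: "\<And>i. i < Suc n \<Longrightarrow> Z $$ (i,0) = (if i = 0 then g 0 else 0)"
    and block: "\<And>i j. i < n \<Longrightarrow> j < n \<Longrightarrow>
      Z $$ (Suc i, Suc j) = (W * mat_diag n (\<lambda>i. g (Suc i)) * transpose_mat W) $$ (i,j)"
  shows "Z = block_diag_one W * mat_diag (Suc n) g * transpose_mat (block_diag_one W)"
    (is "Z = ?P * mat_diag (Suc n) g * transpose_mat ?P")
proof (rule eq_matI)
  note P = index_block_diag_one[OF W]
  have Pc: "?P \<in> carrier_mat (Suc n) (Suc n)" using W by simp
  fix i j assume "i < dim_row (?P * mat_diag (Suc n) g * transpose_mat ?P)"
    "j < dim_col (?P * mat_diag (Suc n) g * transpose_mat ?P)"
  hence ij: "i < Suc n" "j < Suc n" using Pc by auto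
  have "(?P * mat_diag (Suc n) g * transpose_mat ?P) $$ (i,j) = (\<Sum>k<Suc n. ?P $$ (i,k) * g k * ?P $$ (j,k))"
    by (rule index_mat_diag_sandwich[OF Pc Pc ij])
  also have "\<dots> = ?P $$ (i,0) * g 0 * ?P $$ (j,0) + (\<Sum>k<n. ?P $$ (i,Suc k) * g (Suc k) * ?P $$ (j,Suc k))"
    by (rule sum.lessThan_Suc_shift)
  also have "\<dots> = Z $$ (i,j)"
  proof (cases i; cases j)
    fix i' j' assume ij': "i = Suc i'" "j = Suc j'"
    have "(\<Sum>k<n. ?P $$ (i,Suc k) * g (Suc k) * ?P $$ (j,Suc k))
        = (W * mat_diag n (\<lambda>i. g (Suc i)) * transpose_mat W) $$ (i',j')"
      by (subst index_mat_diag_sandwich[OF W W]) (use ij ij' in \<open>simp_all add: P\<close>)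
    thus ?thesis using ij ij' P block by simp
  qed (use ij P row0 col0 in auto)
  finally show "Z $$ (i,j) = (?P * mat_diag (Suc n) g * transpose_mat ?P) $$ (i,j)" by simp
qed (use W Z in auto)

lemma transpose_unitary_congruence:
  assumes "unitary_mat n Q" "Z \<in> carrier_mat n n" "transpose_mat Z = Z"
  shows "transpose_mat (adj Q * Z * cmat Q) = adj Q * Z * cmat Q"
  using assms unitary_matD[OF assms(1)] by (simp add: square_mat_simps[where n=n] conj_transpose_simps)

lemma unitary_congruence_inverse:
  assumes Q: "unitary_mat n Q" and Z: "Z \<in> carrier_mat n n"
  shows "Q * (adj Q * Z * cmat Q) * transpose_mat Q = Z"
proof -
  note q = unitary_matD[OF Q] unitary_cmat_transpose[OF Q]
  have "Q * (adj Q * Z * cmat Q) * transpose_mat Q = Q * (adj Q * (Z * (cmat Q * transpose_mat Q)))"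
    using q Z by (simp add: square_mat_simps[where n=n])
  thus ?thesis using q Z by (simp add: mult_left_inverse_cancel[of Q "adj Q" n])
qed

theorem takagi_factorization:
  fixes Z :: "complex mat"
  assumes "Z \<in> carrier_mat n n" "transpose_mat Z = Z"
  shows "\<exists>W \<sigma>. unitary_mat n W \<and> (\<forall>i. \<sigma> i \<ge> 0) \<and>
           Z = W * mat_diag n (\<lambda>i. complex_of_real (\<sigma> i)) * transpose_mat W"
  using assms
proof (induction n arbitrary: Z)
  case 0
  thus ?case using unitary_one[of 0] by (intro exI[of _ "1\<^sub>m 0"] exI[of _ "\<lambda>_. 0"]) auto
next
  case (Suc n Z)
  have Z: "Z \<in> carrier_mat (Suc n) (Suc n)" and sym: "transpose_mat Z = Z" by fact+
  obtain x \<sigma> where x: "x \<in> carrier_vec (Suc n)" "x \<bullet>c x = 1" "\<sigma> \<ge> 0"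
    "Z *\<^sub>v conjugate x = complex_of_real \<sigma> \<cdot>\<^sub>v x"
    using symmetric_mat_coneigenvector[OF Z _ sym] by auto
  obtain Q where Q: "unitary_mat (Suc n) Q" and Qx: "\<And>i. i < Suc n \<Longrightarrow> Q $$ (i,0) = x $ i"
    using unitary_with_first_column[OF x(1,2)] by blast
  define Z' where "Z' = adj Q * Z * cmat Q"
  have Z'c: "Z' \<in> carrier_mat (Suc n) (Suc n)" using unitary_matD[OF Q] Z unfolding Z'_def by simp
  have tZ': "transpose_mat Z' = Z'" unfolding Z'_def by (rule transpose_unitary_congruence[OF Q Z sym])
  have symZ': "Z' $$ (i,j) = Z' $$ (j,i)" if "i < Suc n" "j < Suc n" for i j
    using arg_cong[OF tZ', of "\<lambda>A. A $$ (j,i)"] that Z'c by simp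
  have col0: "Z' $$ (i,0) = (if i = 0 then complex_of_real \<sigma> else 0)" if "i < Suc n" for i
    unfolding Z'_def by (rule takagi_deflation[OF Z Q that x(1) Qx x(4)])
  define Z3 where "Z3 = mat n n (\<lambda>(i,j). Z' $$ (Suc i, Suc j))"
  have "transpose_mat Z3 = Z3" unfolding Z3_def by (rule eq_matI) (auto simp: symZ')
  then obtain W \<tau> where W: "unitary_mat n W" "\<forall>i. \<tau> i \<ge> 0"
    and Z3: "Z3 = W * mat_diag n (\<lambda>i. complex_of_real (\<tau> i)) * transpose_mat W"
    using Suc.IH[of Z3] unfolding Z3_def by auto
  define \<sigma>' where "\<sigma>' i = (if i = 0 then \<sigma> else \<tau> (i - 1))" for i
  have \<sigma>'_Suc: "(\<lambda>i. complex_of_real (\<sigma>' (Suc i))) = (\<lambda>i. complex_of_real (\<tau> i))"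
    by (simp add: \<sigma>'_def)
  have "Z' = block_diag_one W * mat_diag (Suc n) (\<lambda>i. complex_of_real (\<sigma>' i)) * transpose_mat (block_diag_one W)"
  proof (rule block_diag_one_sandwich[OF unitary_matD(1)[OF W(1)] Z'c])
    show "Z' $$ (0,j) = (if j = 0 then complex_of_real (\<sigma>' 0) else 0)" if "j < Suc n" for j
      using col0[OF that] symZ'[OF _ that] by (simp add: \<sigma>'_def)
    show "Z' $$ (Suc i, Suc j)
        = (W * mat_diag n (\<lambda>i. complex_of_real (\<sigma>' (Suc i))) * transpose_mat W) $$ (i,j)"
      if "i < n" "j < n" for i j
      using that unfolding \<sigma>'_Suc Z3[symmetric] Z3_def by simp
  qed (simp add: col0 \<sigma>'_def)
  hence "Z = (Q * block_diag_one W) * mat_diag (Suc n) (\<lambda>i. complex_of_real (\<sigma>' i))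
      * transpose_mat (Q * block_diag_one W)"
    using unitary_congruence_inverse[OF Q Z] unitary_matD[OF Q] unitary_matD[OF W(1)]
    by (simp add: Z'_def square_mat_simps[where n="Suc n"])
  moreover have "unitary_mat (Suc n) (Q * block_diag_one W)"
    by (intro unitary_mult Q unitary_block_diag_one W(1))
  moreover have "\<forall>i. \<sigma>' i \<ge> 0" using x(3) W(2) by (simp add: \<sigma>'_def)
  ultimately show ?case by blast
qed

section \<open>Matrices of bounded rank\<close>

definition factors_through :: "nat \<Rightarrow> nat \<Rightarrow> complex mat \<Rightarrow> bool" where
  "factors_through n m X \<longleftrightarrow> (\<exists>F H. F \<in> carrier_mat n m \<and> H \<in> carrier_mat m n \<and> X = F * H)"

lemma sum_lessThan_if_less:
  fixes g :: "nat \<Rightarrow> 'a :: comm_monoid_add"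
  assumes "m \<le> k"
  shows "(\<Sum>c<k. if c < m then g c else 0) = (\<Sum>c<m. g c)"
proof -
  have "(\<Sum>c<k. if c < m then g c else 0) = (\<Sum>c\<in>{c\<in>{..<k}. c < m}. g c)"
    by (rule sum.inter_filter[symmetric]) simp
  also have "{c\<in>{..<k}. c < m} = {..<m}" using assms by auto
  finally show ?thesis .
qed

lemma sum_lessThan_add:
  fixes g :: "nat \<Rightarrow> 'a :: comm_monoid_add"
  shows "(\<Sum>c<a + b. g c) = (\<Sum>c<a. g c) + (\<Sum>c<b. g (a + c))"
  by (induction b) (simp_all add: add.assoc)

lemma factors_through_mult:
  assumes "factors_through n m X" "A \<in> carrier_mat n n" "B \<in> carrier_mat n n"
  shows "factors_through n m (A * X * B)"
proof -
  obtain F H where F: "F \<in> carrier_mat n m" and H: "H \<in> carrier_mat m n" and X: "X = F * H"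
    using assms(1) unfolding factors_through_def by blast
  have FH: "F * H \<in> carrier_mat n n" using F H by (rule mult_carrier_mat)
  have "A * X * B = A * (F * H * B)"
    unfolding X by (rule assoc_mult_mat[OF assms(2) FH assms(3)])
  also have "F * H * B = F * (H * B)"
    by (rule assoc_mult_mat[OF F H assms(3)])
  also have "A * (F * (H * B)) = (A * F) * (H * B)"
    by (rule assoc_mult_mat[symmetric, OF assms(2) F mult_carrier_mat[OF H assms(3)]])
  finally have "A * X * B = (A * F) * (H * B)" .
  with mult_carrier_mat[OF assms(2) F] mult_carrier_mat[OF H assms(3)] show ?thesis
    unfolding factors_through_def by blast
qed

lemma factors_through_diff:
  assumes "factors_through n a X" "factors_through n b Y"
  shows "factors_through n (a + b) (X - Y)"
proof -
  obtain F1 H1 where F1: "F1 \<in> carrier_mat n a" "H1 \<in> carrier_mat a n" "X = F1 * H1"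
    using assms(1) unfolding factors_through_def by blast
  obtain F2 H2 where F2: "F2 \<in> carrier_mat n b" "H2 \<in> carrier_mat b n" "Y = F2 * H2"
    using assms(2) unfolding factors_through_def by blast
  define F where "F = mat n (a + b) (\<lambda>(i,k). if k < a then F1 $$ (i,k) else - F2 $$ (i, k - a))"
  define H where "H = mat (a + b) n (\<lambda>(k,j). if k < a then H1 $$ (k,j) else H2 $$ (k - a, j))"
  have "X - Y = F * H"
  proof (rule eq_matI)
    fix i j assume "i < dim_row (F * H)" "j < dim_col (F * H)"
    hence ij: "i < n" "j < n" by (simp_all add: F_def H_def)
    have "(F * H) $$ (i,j) = (\<Sum>k<a. F1 $$ (i,k) * H1 $$ (k,j)) - (\<Sum>k<b. F2 $$ (i,k) * H2 $$ (k,j))"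
      using ij by (simp add: index_mult_mat_sum[of _ n "a + b" _ n] sum_lessThan_add F_def H_def
          sum_negf del: index_mult_mat(1))
    also have "\<dots> = (X - Y) $$ (i,j)"
      using F1 F2 ij by (simp add: index_mult_mat_sum[of _ n a _ n] index_mult_mat_sum[of _ n b _ n]
          del: index_mult_mat(1))
    finally show "(X - Y) $$ (i,j) = (F * H) $$ (i,j)" by simp
  qed (use F1 F2 in \<open>simp_all add: F_def H_def\<close>)
  moreover have "F \<in> carrier_mat n (a + b)" "H \<in> carrier_mat (a + b) n" by (simp_all add: F_def H_def)
  ultimately show ?thesis unfolding factors_through_def by blast
qed

lemma factors_through_mat_diag:
  assumes "\<And>i. L \<le> i \<Longrightarrow> f i = 0"
  shows "factors_through n L (mat_diag n f)"
proof -
  define F where "F = mat n L (\<lambda>(i,k). if i = k then f i else 0)"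
  define H where "H = mat L n (\<lambda>(k,j). if k = j then 1 else (0 :: complex))"
  have "mat_diag n f = F * H"
  proof (rule eq_matI)
    fix i j assume "i < dim_row (F * H)" "j < dim_col (F * H)"
    hence ij: "i < n" "j < n" by (simp_all add: F_def H_def)
    have "(F * H) $$ (i,j) = (\<Sum>k<L. F $$ (i,k) * H $$ (k,j))"
      using ij by (simp add: index_mult_mat_sum[of _ n L _ n] F_def H_def del: index_mult_mat(1))
    also have "\<dots> = (\<Sum>k<L. if k = i then (if i = j then f i else 0) else 0)"
      using ij by (intro sum.cong) (auto simp: F_def H_def)
    finally show "mat_diag n f $$ (i,j) = (F * H) $$ (i,j)" using ij assms[of i] by auto
  qed (simp_all add: F_def H_def)
  moreover have "F \<in> carrier_mat n L" "H \<in> carrier_mat L n" by (simp_all add: F_def H_def)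
  ultimately show ?thesis unfolding factors_through_def by blast
qed

lemma det_mult_narrow:
  fixes F H :: "'a :: idom mat"
  assumes F: "F \<in> carrier_mat k m" and H: "H \<in> carrier_mat m k" and mk: "m < k"
  shows "det (F * H) = 0"
proof -
  define F' where "F' = mat k k (\<lambda>(a,c). if c < m then F $$ (a,c) else 0)"
  define H' where "H' = mat k k (\<lambda>(c,b). if c < m then H $$ (c,b) else 0)"
  have F'c: "F' \<in> carrier_mat k k" and H'c: "H' \<in> carrier_mat k k" by (simp_all add: F'_def H'_def)
  have "F * H = F' * H'"
  proof (rule eq_matI)
    fix a b assume "a < dim_row (F' * H')" "b < dim_col (F' * H')"
    hence ab: "a < k" "b < k" by (simp_all add: F'_def H'_def)
    have "(F' * H') $$ (a,b) = (\<Sum>c<k. F' $$ (a,c) * H' $$ (c,b))"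
      by (rule index_mult_mat_sum[OF F'c H'c ab])
    also have "\<dots> = (\<Sum>c<k. if c < m then F $$ (a,c) * H $$ (c,b) else 0)"
      using ab by (intro sum.cong) (simp_all add: F'_def H'_def)
    also have "\<dots> = (F * H) $$ (a,b)"
      using ab mk F H by (simp add: sum_lessThan_if_less index_mult_mat_sum[OF F H] del: index_mult_mat)
    finally show "(F * H) $$ (a,b) = (F' * H') $$ (a,b)" ..
  qed (use F H in \<open>simp_all add: F'_def H'_def\<close>)
  moreover have "det F' = 0"
  proof -
    have "F' *\<^sub>v unit_vec k (k - 1) = 0\<^sub>v k"
      using mk by (intro eq_vecI) (simp_all add: F'_def)
    moreover have "unit_vec k (k - 1) \<noteq> (0\<^sub>v k :: 'a vec)"
      using mk by (auto simp: vec_eq_iff)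
    ultimately show ?thesis
      unfolding det_0_iff_vec_prod_zero[OF F'c] by (intro exI[of _ "unit_vec k (k - 1)"]) simp
  qed
  ultimately show ?thesis by (simp add: det_mult[OF F'c H'c])
qed

text \<open>Restricted to its nonzero entries the matrix is invertible, so it cannot factor through
  fewer dimensions.\<close>

lemma card_nonzero_mat_diag_le:
  assumes "factors_through n m (mat_diag n f)"
  shows "card {i. i < n \<and> f i \<noteq> 0} \<le> m"
proof (rule ccontr)
  obtain F H where F: "F \<in> carrier_mat n m" and H: "H \<in> carrier_mat m n" and FH: "mat_diag n f = F * H"
    using assms unfolding factors_through_def by blast
  define S where "S = {i. i < n \<and> f i \<noteq> 0}"
  define k where "k = card S"
  assume "\<not> card {i. i < n \<and> f i \<noteq> 0} \<le> m"
  hence mk: "m < k" unfolding k_def S_def by simp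
  obtain e where e: "bij_betw e {0..<k} S"
    using ex_bij_betw_nat_finite[of S] unfolding k_def S_def by auto
  have eS: "e a < n" "f (e a) \<noteq> 0" if "a < k" for a
    using e that unfolding bij_betw_def S_def by auto
  have einj: "e a = e b \<longleftrightarrow> a = b" if "a < k" "b < k" for a b
    using e that unfolding bij_betw_def inj_on_def by auto
  define Fk where "Fk = mat k m (\<lambda>(a,c). F $$ (e a, c))"
  define Hk where "Hk = mat m k (\<lambda>(c,b). H $$ (c, e b))"
  have "mat_diag k (\<lambda>a. f (e a)) = Fk * Hk"
  proof (rule eq_matI)
    fix a b assume "a < dim_row (Fk * Hk)" "b < dim_col (Fk * Hk)"
    hence ab: "a < k" "b < k" by (simp_all add: Fk_def Hk_def)
    have "(Fk * Hk) $$ (a,b) = (F * H) $$ (e a, e b)"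
      using ab eS F H by (auto simp: index_mult_mat_sum[of _ k m _ k] index_mult_mat_sum[OF F H]
          Fk_def Hk_def simp del: index_mult_mat)
    thus "mat_diag k (\<lambda>a. f (e a)) $$ (a,b) = (Fk * Hk) $$ (a,b)"
      unfolding FH[symmetric] using ab eS einj by simp
  qed (simp_all add: Fk_def Hk_def)
  hence "det (mat_diag k (\<lambda>a. f (e a))) = 0"
    using det_mult_narrow[of Fk k m Hk] mk by (simp add: Fk_def Hk_def)
  moreover have "det (mat_diag k (\<lambda>a. f (e a))) \<noteq> 0"
  proof -
    have "det (mat_diag k (\<lambda>a. f (e a))) = prod_list (diag_mat (mat_diag k (\<lambda>a. f (e a))))"
      by (rule det_upper_triangular[of _ k]) (simp_all add: upper_triangular_def)
    also have "diag_mat (mat_diag k (\<lambda>a. f (e a))) = map (\<lambda>a. f (e a)) [0..<k]"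
      by (simp add: diag_mat_def)
    finally show ?thesis using eS by auto
  qed
  ultimately show False by contradiction
qed

section \<open>Bogoliubov transformations\<close>

text \<open>The conditions under which the transformed annihilation operators again satisfy the
  canonical commutation relations.\<close>

definition bogoliubov :: "nat \<Rightarrow> bogo \<Rightarrow> bool" where
  "bogoliubov n G \<longleftrightarrow> (case G of (A, B) \<Rightarrow> A \<in> carrier_mat n n \<and> B \<in> carrier_mat n n \<and>
     A * adj A - B * adj B = 1\<^sub>m n \<and> A * transpose_mat B = B * transpose_mat A)"

text \<open>Expanded, the relations of the product are linear combinations of those of the
  factors; compared entrywise this is linear arithmetic over the entries of the products.\<close>

lemma bogoliubov_comp:
  assumes "bogoliubov n G1" "bogoliubov n G2"
  shows "bogoliubov n (bogo_comp G1 G2)"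
proof -
  obtain A1 B1 where G1: "G1 = (A1,B1)" by force
  obtain A2 B2 where G2: "G2 = (A2,B2)" by force
  have c: "A1 \<in> carrier_mat n n" "B1 \<in> carrier_mat n n" "A2 \<in> carrier_mat n n" "B2 \<in> carrier_mat n n"
    and R11: "A1 * adj A1 - B1 * adj B1 = 1\<^sub>m n" and R12: "A1 * transpose_mat B1 = B1 * transpose_mat A1"
    and R21: "A2 * adj A2 - B2 * adj B2 = 1\<^sub>m n" and R22: "A2 * transpose_mat B2 = B2 * transpose_mat A2"
    using assms by (auto simp: bogoliubov_def G1 G2)
  note ms = square_mat_simps[where n=n] conj_transpose_simps
  have C21: "cmat A2 * transpose_mat A2 - cmat B2 * transpose_mat B2 = 1\<^sub>m n"
    using arg_cong[OF R21, of cmat] c by (simp add: ms)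
  have C22: "cmat A2 * adj B2 = cmat B2 * adj A2"
    using arg_cong[OF R22, of cmat] c by (simp add: ms)
  have "A1 * (A2 * adj A2 - B2 * adj B2) * adj A1 = A1 * adj A1"
    and "B1 * (cmat A2 * transpose_mat A2 - cmat B2 * transpose_mat B2) * adj B1 = B1 * adj B1"
    and "A1 * (A2 * transpose_mat B2) * adj B1 = A1 * (B2 * transpose_mat A2) * adj B1"
    and "B1 * (cmat A2 * adj B2) * adj A1 = B1 * (cmat B2 * adj A2) * adj A1"
    and "A1 * (A2 * transpose_mat B2) * transpose_mat A1 = A1 * (B2 * transpose_mat A2) * transpose_mat A1"
    and "A1 * (A2 * adj A2 - B2 * adj B2) * transpose_mat B1 = A1 * transpose_mat B1"
    and "B1 * (cmat A2 * transpose_mat A2 - cmat B2 * transpose_mat B2) * transpose_mat A1 = B1 * transpose_mat A1"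
    and "B1 * (cmat A2 * adj B2) * transpose_mat B1 = B1 * (cmat B2 * adj A2) * transpose_mat B1"
    using R21 C21 R22 C22 c by (simp_all add: ms)
  note F = this R11 R12
  define A where "A = A1 * A2 + B1 * cmat B2"
  define B where "B = A1 * B2 + B1 * cmat A2"
  have "A * adj A - B * adj B = 1\<^sub>m n"
  proof (rule eq_matI)
    fix i j assume "i < dim_row (1\<^sub>m n)" "j < dim_col (1\<^sub>m n)"
    hence ij: "i < n" "j < n" by simp_all
    from F[THEN arg_cong[of _ _ "\<lambda>X. X $$ (i,j)"]] c ij
    show "(A * adj A - B * adj B) $$ (i,j) = 1\<^sub>m n $$ (i,j)"
      unfolding A_def B_def
      by (simp add: ms del: index_mult_mat(1) index_one_mat)
        (simp only: complex_eq_iff plus_complex.sel uminus_complex.sel minus_complex.sel, linarith)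
  qed (use c in \<open>simp_all add: A_def B_def\<close>)
  moreover have "A * transpose_mat B = B * transpose_mat A"
  proof (rule eq_matI)
    fix i j assume "i < dim_row (B * transpose_mat A)" "j < dim_col (B * transpose_mat A)"
    hence ij: "i < n" "j < n" using c by (simp_all add: A_def B_def)
    from F[THEN arg_cong[of _ _ "\<lambda>X. X $$ (i,j)"]] c ij
    show "(A * transpose_mat B) $$ (i,j) = (B * transpose_mat A) $$ (i,j)"
      unfolding A_def B_def
      by (simp add: ms del: index_mult_mat(1) index_one_mat)
        (simp only: complex_eq_iff plus_complex.sel uminus_complex.sel minus_complex.sel, linarith)
  qed (use c in \<open>simp_all add: A_def B_def\<close>)
  ultimately show ?thesis
    using c by (simp add: G1 G2 bogo_comp_def bogoliubov_def A_def B_def)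
qed

lemma bogoliubov_lin_opt: "unitary_mat n U \<Longrightarrow> bogoliubov n (lin_opt n U)"
  by (auto simp: bogoliubov_def lin_opt_def unitary_mat_def)

lemma squeezer_eq_mat_diag:
  "squeezer n r = (mat_diag n (\<lambda>i. complex_of_real (cosh (r i))),
                   mat_diag n (\<lambda>i. complex_of_real (sinh (r i))))"
  unfolding squeezer_def mat_diag_def by auto

lemma bogoliubov_squeezer: "bogoliubov n (squeezer n r)"
proof -
  have "complex_of_real (cosh x) * complex_of_real (cosh x) - complex_of_real (sinh x) * complex_of_real (sinh x) = 1"
    for x :: real
    using cosh_square_eq[of x] by (simp flip: of_real_mult of_real_diff add: power2_eq_square)
  thus ?thesis
    unfolding bogoliubov_def squeezer_eq_mat_diag by (auto simp: mult.commute)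
qed

lemma phase_shifter_eq_lin_opt: "phase_shifter n \<phi> = lin_opt n (mat_diag n (\<lambda>i. cis (\<phi> i)))"
  unfolding phase_shifter_def lin_opt_def mat_diag_def by auto

lemma bogoliubov_phase_shifter: "bogoliubov n (phase_shifter n \<phi>)"
  unfolding phase_shifter_eq_lin_opt
  by (intro bogoliubov_lin_opt unitary_mat_diag) (simp add: cis_cnj cis_mult)

lemma bogo_comp_bloch_messiah:
  assumes "U \<in> carrier_mat n n" "V \<in> carrier_mat n n"
  shows "bogo_comp (lin_opt n U) (bogo_comp (squeezer n r) (lin_opt n V)) =
     (U * mat_diag n (\<lambda>i. complex_of_real (cosh (r i))) * V,
      U * mat_diag n (\<lambda>i. complex_of_real (sinh (r i))) * cmat V)"
  unfolding bogo_comp_def lin_opt_def squeezer_eq_mat_diag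
  using assms by (simp add: square_mat_simps[where n=n])

lemma gaussian_imp_bogoliubov: "gaussian n G \<Longrightarrow> bogoliubov n G"
  unfolding gaussian_def by (auto intro!: bogoliubov_comp bogoliubov_lin_opt bogoliubov_squeezer)

lemma gaussian_bogo_adj:
  assumes "gaussian n G"
  shows "gaussian n (bogo_adj G)"
proof -
  obtain U V s where U: "unitary_mat n U" and V: "unitary_mat n V"
    and G: "G = bogo_comp (lin_opt n U) (bogo_comp (squeezer n s) (lin_opt n V))"
    using assms unfolding gaussian_def by blast
  have c: "U \<in> carrier_mat n n" "V \<in> carrier_mat n n" using U V by (simp_all add: unitary_matD)
  have "bogo_adj G
      = bogo_comp (lin_opt n (adj V)) (bogo_comp (squeezer n (\<lambda>i. - s i)) (lin_opt n (adj U)))"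
    unfolding G bogo_comp_bloch_messiah[OF c] bogo_comp_bloch_messiah[OF adj_carrier_iff[THEN iffD2, OF c(2)]
        adj_carrier_iff[THEN iffD2, OF c(1)]] bogo_adj_def
    using c by (simp add: square_mat_simps[where n=n] conj_transpose_simps mat_diag_uminus)
  thus ?thesis unfolding gaussian_def using unitary_adj[OF U] unitary_adj[OF V] by blast
qed

section \<open>The Bloch--Messiah decomposition\<close>

lemma bogoliubov_invertible:
  assumes "bogoliubov n (A,B)"
  obtains Ai where "Ai \<in> carrier_mat n n" "A * Ai = 1\<^sub>m n" "Ai * A = 1\<^sub>m n"
proof -
  have c: "A \<in> carrier_mat n n" "B \<in> carrier_mat n n" and R1: "A * adj A - B * adj B = 1\<^sub>m n"
    using assms by (auto simp: bogoliubov_def)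
  have AA: "A * adj A = 1\<^sub>m n + B * adj B"
  proof (rule eq_matI)
    fix i j assume "i < dim_row (1\<^sub>m n + B * adj B)" "j < dim_col (1\<^sub>m n + B * adj B)"
    with arg_cong[OF R1, of "\<lambda>X. X $$ (i,j)"] c
    show "(A * adj A) $$ (i,j) = (1\<^sub>m n + B * adj B) $$ (i,j)"
      by (simp add: diff_eq_eq add.commute del: index_mult_mat(1) index_one_mat)
  qed (use c in auto)
  have "det A \<noteq> 0"
  proof
    assume "det A = 0"
    hence "det (A * adj A) = 0" using c by (simp add: det_mult[of _ n])
    then obtain v where v: "v \<in> carrier_vec n" "v \<noteq> 0\<^sub>v n" "(A * adj A) *\<^sub>v v = 0\<^sub>v n"
      using det_0_iff_vec_prod_zero[of "A * adj A" n] c by auto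
    define u where "u = adj B *\<^sub>v v"
    have u: "u \<in> carrier_vec n" using c v unfolding u_def by simp
    have "(A * adj A) *\<^sub>v v = v + B *\<^sub>v u"
      unfolding AA u_def using c v by (simp add: add_mult_distrib_mat_vec[of _ n n])
    hence "v + B *\<^sub>v u = 0\<^sub>v n" using v(3) by simp
    hence "(v + B *\<^sub>v u) \<bullet>c v = 0" using v(1) by simp
    hence "v \<bullet>c v + u \<bullet>c u = 0"
      using v u c cscalar_prod_adj[OF c(2) u v(1)] by (simp add: u_def add_scalar_prod_distrib[of _ n])
    moreover have "v \<bullet>c v \<ge> 0" "u \<bullet>c u \<ge> 0" by auto
    ultimately have "v \<bullet>c v = 0" by (simp add: add_nonneg_eq_0_iff)
    with v show False by simp
  qed
  from det_non_zero_imp_unit[OF c(1) this, of "()"] that show ?thesis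
    unfolding Units_def by (auto simp: ring_mat_simps)
qed

lemma bogoliubov_inverse_mult:
  assumes "bogoliubov n (A,B)" and Ai: "Ai \<in> carrier_mat n n" "A * Ai = 1\<^sub>m n" "Ai * A = 1\<^sub>m n"
  shows "transpose_mat (Ai * B) = Ai * B"
    and "Ai * adj Ai = 1\<^sub>m n - (Ai * B) * adj (Ai * B)"
proof -
  have c: "A \<in> carrier_mat n n" "B \<in> carrier_mat n n" and R1: "A * adj A - B * adj B = 1\<^sub>m n"
    and R2: "A * transpose_mat B = B * transpose_mat A"
    using assms by (auto simp: bogoliubov_def)
  note ms = square_mat_simps[where n=n] conj_transpose_simps
  have tAAi: "transpose_mat A * transpose_mat Ai = 1\<^sub>m n"
    using arg_cong[OF Ai(3), of transpose_mat] Ai(1) c by (simp add: ms)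
  have adjAAi: "adj A * adj Ai = 1\<^sub>m n"
    using arg_cong[OF Ai(3), of adj] Ai(1) c by (simp add: ms)
  have "transpose_mat (Ai * B) = Ai * (A * (transpose_mat B * transpose_mat Ai))"
    using Ai c by (simp add: ms mult_left_inverse_cancel[of Ai A n _ n])
  also have "\<dots> = Ai * (B * (transpose_mat A * transpose_mat Ai))"
    using arg_cong[OF R2, of "\<lambda>X. Ai * X * transpose_mat Ai"] Ai c by (simp add: ms)
  finally show "transpose_mat (Ai * B) = Ai * B" unfolding tAAi using Ai c by simp
  have "Ai * (A * adj A - B * adj B) * adj Ai = Ai * adj Ai" using R1 Ai by simp
  moreover have "Ai * (A * (adj A * adj Ai)) = adj A * adj Ai"
    using Ai c by (intro mult_left_inverse_cancel[of Ai A n _ n]) auto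
  ultimately have "adj A * adj Ai - Ai * (B * (adj B * adj Ai)) = Ai * adj Ai"
    using Ai c by (simp add: ms)
  thus "Ai * adj Ai = 1\<^sub>m n - (Ai * B) * adj (Ai * B)"
    unfolding adjAAi using Ai c by (simp add: ms)
qed

text \<open>An invertible matrix has no zero row.\<close>

lemma invertible_gram_diag_pos:
  fixes X Y :: "complex mat"
  assumes Y: "Y \<in> carrier_mat n n" and X: "X \<in> carrier_mat n n" and YX: "Y * X = 1\<^sub>m n"
    and YY: "Y * adj Y = mat_diag n (\<lambda>i. complex_of_real (g i))" and i: "i < n"
  shows "g i > 0"
proof (rule ccontr)
  assume "\<not> g i > 0"
  have "(Y * adj Y) $$ (i,i) = (\<Sum>k<n. Y $$ (i,k) * cnj (Y $$ (i,k)))"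
    using Y i by (simp add: index_mult_mat_sum[of _ n n _ n] del: index_mult_mat)
  also have "\<dots> = (\<Sum>k<n. complex_of_real ((cmod (Y $$ (i,k)))\<^sup>2))"
    by (intro sum.cong refl) (rule complex_norm_square[symmetric])
  also have "\<dots> = complex_of_real (\<Sum>k<n. (cmod (Y $$ (i,k)))\<^sup>2)"
    by simp
  finally have "(Y * adj Y) $$ (i,i) = complex_of_real (\<Sum>k<n. (cmod (Y $$ (i,k)))\<^sup>2)" .
  moreover have "(Y * adj Y) $$ (i,i) = complex_of_real (g i)" unfolding YY using i by simp
  ultimately have "(\<Sum>k<n. (cmod (Y $$ (i,k)))\<^sup>2) = g i" by (metis of_real_eq_iff)
  with \<open>\<not> g i > 0\<close> have "(\<Sum>k<n. (cmod (Y $$ (i,k)))\<^sup>2) = 0"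
    by (smt (verit) sum_nonneg zero_le_power2)
  hence Y0: "Y $$ (i,k) = 0" if "k < n" for k using that by (simp add: sum_nonneg_eq_0_iff)
  have "(Y * X) $$ (i,i) = (\<Sum>k<n. Y $$ (i,k) * X $$ (k,i))"
    using Y X i by (simp add: index_mult_mat_sum[of _ n n _ n] del: index_mult_mat)
  also have "\<dots> = 0" using Y0 by simp
  finally show False unfolding YX using i by simp
qed

text \<open>If \<open>Y = X\<^sup>-\<^sup>1\<close> and \<open>Y Y\<^sup>* = D\<^sup>2\<close> with \<open>D\<close> real diagonal and invertible, then
  \<open>X\<^sup>* X = D\<^sup>-\<^sup>2\<close>, so \<open>X D\<close> is unitary.\<close>

lemma unitary_mult_gram_sqrt:
  fixes X Y :: "complex mat"
  assumes Y: "Y \<in> carrier_mat n n" and X: "X \<in> carrier_mat n n"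
    and YX: "Y * X = 1\<^sub>m n" and XY: "X * Y = 1\<^sub>m n"
    and YY: "Y * adj Y = mat_diag n (\<lambda>i. complex_of_real (d i * d i))"
    and d: "\<And>i. i < n \<Longrightarrow> d i \<noteq> 0"
  shows "unitary_mat n (X * mat_diag n (\<lambda>i. complex_of_real (d i)))"
proof (rule unitary_matI)
  note ms = square_mat_simps[where n=n] conj_transpose_simps
  define Q where "Q = adj X * X"
  have Qc: "Q \<in> carrier_mat n n" unfolding Q_def using X by simp
  have "Q * (Y * adj Y) = adj X * (X * Y * adj Y)"
    unfolding Q_def using X Y by (simp add: ms)
  also have "\<dots> = adj (Y * X)" unfolding XY using X Y by (simp add: ms)
  finally have QYY: "Q * mat_diag n (\<lambda>i. complex_of_real (d i * d i)) = 1\<^sub>m n"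
    unfolding YY YX by simp
  have Qij: "Q $$ (i,j) * complex_of_real (d j * d j) = (if i = j then 1 else 0)"
    if "i < n" "j < n" for i j
    using arg_cong[OF QYY, of "\<lambda>Z. Z $$ (i,j)"] that Qc
    by (simp add: index_mult_mat_diag[of _ n n] del: index_mult_mat(1))
  have "adj (X * mat_diag n (\<lambda>i. complex_of_real (d i))) * (X * mat_diag n (\<lambda>i. complex_of_real (d i)))
      = mat_diag n (\<lambda>i. complex_of_real (d i)) * Q * mat_diag n (\<lambda>i. complex_of_real (d i))"
    unfolding Q_def using X by (simp add: ms)
  also have "\<dots> = 1\<^sub>m n"
  proof (rule eq_matI)
    fix i j assume "i < dim_row (1\<^sub>m n)" "j < dim_col (1\<^sub>m n)"
    hence ij: "i < n" "j < n" by auto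
    have "(mat_diag n (\<lambda>i. complex_of_real (d i)) * Q * mat_diag n (\<lambda>i. complex_of_real (d i))) $$ (i,j)
        = (mat_diag n (\<lambda>i. complex_of_real (d i)) * Q) $$ (i,j) * complex_of_real (d j)"
      using Qc ij by (intro index_mult_mat_diag) auto
    also have "\<dots> = complex_of_real (d i) * Q $$ (i,j) * complex_of_real (d j)"
      using index_mat_diag_mult[OF Qc ij] by simp
    also have "\<dots> = 1\<^sub>m n $$ (i,j)"
      using Qij[OF ij] Qij[OF ij(1) ij(1)] d[OF ij(2)] ij
      by (cases "i = j") (auto simp: ac_simps)
    finally show "(mat_diag n (\<lambda>i. complex_of_real (d i)) * Q * mat_diag n (\<lambda>i. complex_of_real (d i))) $$ (i,j)
        = 1\<^sub>m n $$ (i,j)" .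
  qed (use Qc in auto)
  finally show "adj (X * mat_diag n (\<lambda>i. complex_of_real (d i))) * (X * mat_diag n (\<lambda>i. complex_of_real (d i)))
      = 1\<^sub>m n" .
qed (use X in simp)

lemma cosh_sinh_arsinh_div:
  fixes d s :: real
  assumes "d > 0" "d * d = 1 - s * s"
  shows "d * cosh (arsinh (s / d)) = 1" and "d * sinh (arsinh (s / d)) = s"
proof -
  have "(s / d)\<^sup>2 + 1 = 1 / (d * d)"
    using assms by (simp add: field_simps power2_eq_square)
  hence "cosh (arsinh (s / d)) = 1 / d"
    using assms(1) by (simp add: cosh_arsinh_real real_sqrt_divide)
  thus "d * cosh (arsinh (s / d)) = 1" using assms(1) by simp
  show "d * sinh (arsinh (s / d)) = s" using assms(1) by simp
qed

lemma inverse_gram_takagi: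
  fixes Ai Z W :: "complex mat"
  assumes Ai: "Ai \<in> carrier_mat n n" and AiAi: "Ai * adj Ai = 1\<^sub>m n - Z * adj Z"
    and W: "unitary_mat n W" and Z: "Z = W * mat_diag n (\<lambda>i. complex_of_real (\<sigma> i)) * transpose_mat W"
  shows "(adj W * Ai) * adj (adj W * Ai) = mat_diag n (\<lambda>i. complex_of_real (1 - \<sigma> i * \<sigma> i))"
proof -
  note ms = square_mat_simps[where n=n] conj_transpose_simps
  note w = unitary_matD[OF W] unitary_cmat_transpose[OF W]
  define D where "D = mat_diag n (\<lambda>i. complex_of_real (\<sigma> i))"
  have Dc: "D \<in> carrier_mat n n" by (simp add: D_def)
  have "Z * adj Z = W * (D * (transpose_mat W * (cmat W * (D * adj W))))"
    unfolding Z D_def[symmetric] using w Dc by (simp add: ms D_def)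
  also have "transpose_mat W * (cmat W * (D * adj W)) = D * adj W"
    using w Dc by (intro mult_left_inverse_cancel[of _ _ n _ n]) auto
  finally have ZZ: "Z * adj Z = W * (D * (D * adj W))" .
  have "(adj W * Ai) * adj (adj W * Ai) = adj W * (Ai * adj Ai) * W"
    using w Ai by (simp add: ms)
  also have "\<dots> = adj W * W - adj W * (W * (D * (D * (adj W * W))))"
    unfolding AiAi ZZ using w Dc by (simp add: ms)
  also have "\<dots> = 1\<^sub>m n - D * D"
    using w Dc by (simp add: mult_left_inverse_cancel[of "adj W" W n _ n])
  finally show ?thesis by (simp add: D_def one_minus_mat_diag flip: of_real_mult)
qed

theorem bogoliubov_bloch_messiah:
  assumes bog: "bogoliubov n (A,B)"
  obtains U V r where "unitary_mat n U" "unitary_mat n V"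
    "A = U * mat_diag n (\<lambda>i. complex_of_real (cosh (r i))) * V"
    "B = U * mat_diag n (\<lambda>i. complex_of_real (sinh (r i))) * cmat V"
proof -
  have c: "A \<in> carrier_mat n n" "B \<in> carrier_mat n n" using bog by (auto simp: bogoliubov_def)
  note ms = square_mat_simps[where n=n] conj_transpose_simps
  obtain Ai where Ai: "Ai \<in> carrier_mat n n" "A * Ai = 1\<^sub>m n" "Ai * A = 1\<^sub>m n"
    using bogoliubov_invertible[OF bog] .
  note Z = bogoliubov_inverse_mult[OF bog Ai]
  obtain W \<sigma> where W: "unitary_mat n W"
    and ZW: "Ai * B = W * mat_diag n (\<lambda>i. complex_of_real (\<sigma> i)) * transpose_mat W"
    using takagi_factorization[OF mult_carrier_mat[OF Ai(1) c(2)] Z(1)] by blast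
  note w = unitary_matD[OF W] unitary_cmat_transpose[OF W]
  define X where "X = A * W"
  define Y where "Y = adj W * Ai"
  have XY: "X \<in> carrier_mat n n" "Y \<in> carrier_mat n n"
    using c Ai w by (simp_all add: X_def Y_def)
  have YX: "Y * X = 1\<^sub>m n"
    using c Ai w by (simp add: X_def Y_def ms mult_left_inverse_cancel[of Ai A n _ n])
  have XY1: "X * Y = 1\<^sub>m n"
    using c Ai w by (simp add: X_def Y_def ms mult_left_inverse_cancel[of W "adj W" n _ n])
  have YY: "Y * adj Y = mat_diag n (\<lambda>i. complex_of_real (1 - \<sigma> i * \<sigma> i))"
    unfolding Y_def by (rule inverse_gram_takagi[OF Ai(1) Z(2) W ZW])
  define d where "d i = sqrt (1 - \<sigma> i * \<sigma> i)" for i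
  have gpos: "1 - \<sigma> i * \<sigma> i > 0" if "i < n" for i
    using invertible_gram_diag_pos[OF XY(2,1) YX YY that] .
  have d: "d i > 0" "d i * d i = 1 - \<sigma> i * \<sigma> i" if "i < n" for i
    using gpos[OF that] by (simp_all add: d_def)
  define r where "r i = arsinh (\<sigma> i / d i)" for i
  note r = cosh_sinh_arsinh_div[OF d, folded r_def]
  define U where "U = X * mat_diag n (\<lambda>i. complex_of_real (d i))"
  have "Y * adj Y = mat_diag n (\<lambda>i. complex_of_real (d i * d i))"
    unfolding YY by (intro mat_diag_cong) (simp only: d(2))
  hence U: "unitary_mat n U"
    unfolding U_def by (rule unitary_mult_gram_sqrt[OF XY(2,1) YX XY1]) (use d(1) in fastforce)
  have "A = U * mat_diag n (\<lambda>i. complex_of_real (cosh (r i))) * adj W"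
  proof -
    have "mat_diag n (\<lambda>i. complex_of_real (d i)) * mat_diag n (\<lambda>i. complex_of_real (cosh (r i))) = 1\<^sub>m n"
      using r(1) by (auto simp flip: of_real_mult intro!: mat_diag_cong[of n _ "\<lambda>_. 1", simplified])
    thus ?thesis using c w by (simp add: U_def X_def ms)
  qed
  moreover have "B = U * mat_diag n (\<lambda>i. complex_of_real (sinh (r i))) * cmat (adj W)"
  proof -
    have "mat_diag n (\<lambda>i. complex_of_real (d i)) * mat_diag n (\<lambda>i. complex_of_real (sinh (r i)))
        = mat_diag n (\<lambda>i. complex_of_real (\<sigma> i))"
      using r(2) by (auto simp flip: of_real_mult intro!: mat_diag_cong)
    hence "U * mat_diag n (\<lambda>i. complex_of_real (sinh (r i))) * cmat (adj W) = A * (Ai * B)"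
      unfolding ZW using c w by (simp add: U_def X_def ms)
    thus ?thesis using mult_left_inverse_cancel[OF Ai(2) c(1) Ai(1) c(2)] by simp
  qed
  ultimately show ?thesis using that U unitary_adj[OF W] by blast
qed

lemma card_squeezing_le:
  assumes U: "unitary_mat n U" and V: "unitary_mat n V"
    and B: "B = U * mat_diag n (\<lambda>i. complex_of_real (sinh (r i))) * cmat V"
    and "factors_through n m B"
  shows "card {i. i < n \<and> r i \<noteq> 0} \<le> m"
proof -
  note u = unitary_matD[OF U] and v = unitary_matD[OF V] unitary_cmat_transpose[OF V]
  have eq: "adj U * B * transpose_mat V = mat_diag n (\<lambda>i. complex_of_real (sinh (r i)))"
    unfolding B using u v
    by (simp add: square_mat_simps[where n=n] mult_left_inverse_cancel[of "adj U" U n _ n])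
  have "factors_through n m (adj U * B * transpose_mat V)"
    using u(1) v(1) by (intro factors_through_mult[OF assms(4)]) simp_all
  hence "factors_through n m (mat_diag n (\<lambda>i. complex_of_real (sinh (r i))))"
    unfolding eq .
  thus ?thesis using card_nonzero_mat_diag_le by fastforce
qed

section \<open>Conjugated phase shifters\<close>

lemma snd_conj_lin_opt:
  assumes "bogoliubov n (A,B)" "bogoliubov n (bogo_adj (A,B))" and D: "D \<in> carrier_mat n n"
  shows "snd (bogo_comp (bogo_adj (A,B)) (bogo_comp (lin_opt n D) (A,B)))
       = adj A * (D - 1\<^sub>m n) * B - transpose_mat B * cmat (D - 1\<^sub>m n) * cmat A"
proof -
  note ms = square_mat_simps[where n=n] conj_transpose_simps
  have c: "A \<in> carrier_mat n n" "B \<in> carrier_mat n n" using assms(1) by (auto simp: bogoliubov_def)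
  have rel: "adj A * B = transpose_mat B * cmat A"
    using assms(2) c by (simp add: bogoliubov_def bogo_adj_def transpose_uminus conj_transpose_simps)
  show ?thesis
  proof (rule eq_matI)
    fix i j assume "i < dim_row (adj A * (D - 1\<^sub>m n) * B - transpose_mat B * cmat (D - 1\<^sub>m n) * cmat A)"
      "j < dim_col (adj A * (D - 1\<^sub>m n) * B - transpose_mat B * cmat (D - 1\<^sub>m n) * cmat A)"
    hence ij: "i < n" "j < n" using c by auto
    from arg_cong[OF rel, of "\<lambda>X. X $$ (i,j)"] c D ij
    show "snd (bogo_comp (bogo_adj (A,B)) (bogo_comp (lin_opt n D) (A,B))) $$ (i,j)
        = (adj A * (D - 1\<^sub>m n) * B - transpose_mat B * cmat (D - 1\<^sub>m n) * cmat A) $$ (i,j)"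
      by (simp add: bogo_comp_def bogo_adj_def lin_opt_def ms del: index_mult_mat(1) index_one_mat)
  qed (use c D in \<open>simp_all add: bogo_comp_def bogo_adj_def lin_opt_def\<close>)
qed

lemma factors_through_conj_phase_shifter:
  assumes "gaussian n G"
  shows "factors_through n (2 * L)
    (snd (bogo_comp (bogo_adj G) (bogo_comp (phase_shifter n (\<lambda>i. if i < L then \<phi> i else 0)) G)))"
proof -
  obtain A B where G: "G = (A,B)" by force
  have bog: "bogoliubov n (A,B)" "bogoliubov n (bogo_adj (A,B))"
    using assms gaussian_imp_bogoliubov gaussian_bogo_adj unfolding G by blast+
  have c: "A \<in> carrier_mat n n" "B \<in> carrier_mat n n" using bog(1) by (auto simp: bogoliubov_def)
  define f where "f i = (if i < L then cis (\<phi> i) - 1 else 0)" for i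
  have "mat_diag n (\<lambda>i. cis (if i < L then \<phi> i else 0)) - 1\<^sub>m n = mat_diag n f"
    unfolding mat_diag_minus_one f_def by (rule mat_diag_cong) simp
  hence "snd (bogo_comp (bogo_adj G) (bogo_comp (phase_shifter n (\<lambda>i. if i < L then \<phi> i else 0)) G))
      = adj A * mat_diag n f * B - transpose_mat B * mat_diag n (\<lambda>i. cnj (f i)) * cmat A"
    unfolding G phase_shifter_eq_lin_opt by (simp add: snd_conj_lin_opt[OF bog])
  moreover have "factors_through n L (adj A * mat_diag n f * B)"
    and "factors_through n L (transpose_mat B * mat_diag n (\<lambda>i. cnj (f i)) * cmat A)"
    using c by (auto intro!: factors_through_mult factors_through_mat_diag simp: f_def)
  ultimately show ?thesis by (simp add: factors_through_diff mult_2)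
qed

theorem lemma6:
  fixes M L :: nat and \<phi> :: "nat \<Rightarrow> real" and G0 :: bogo
  assumes "L \<le> M"
    and "gaussian M G0"
  shows "\<exists>U V r. unitary_mat M U \<and> unitary_mat M V \<and>
           card {i. i < M \<and> r i \<noteq> 0} \<le> 2 * L \<and>
           bogo_comp (bogo_adj G0)
             (bogo_comp (phase_shifter M (\<lambda>i. if i < L then \<phi> i else 0)) G0)
           = bogo_comp (lin_opt M U) (bogo_comp (squeezer M r) (lin_opt M V))"
proof -
  define K where "K = bogo_comp (bogo_adj G0) (bogo_comp (phase_shifter M (\<lambda>i. if i < L then \<phi> i else 0)) G0)"
  obtain A B where K: "K = (A, B)" by force
  have "bogoliubov M (A, B)"
    unfolding K[symmetric] K_def using assms(2)
    by (intro bogoliubov_comp gaussian_imp_bogoliubov gaussian_bogo_adj bogoliubov_phase_shifter)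
  then obtain U V r where U: "unitary_mat M U" and V: "unitary_mat M V"
    and A: "A = U * mat_diag M (\<lambda>i. complex_of_real (cosh (r i))) * V"
    and B: "B = U * mat_diag M (\<lambda>i. complex_of_real (sinh (r i))) * cmat V"
    by (rule bogoliubov_bloch_messiah)
  have "factors_through M (2 * L) B"
    using factors_through_conj_phase_shifter[OF assms(2), of L \<phi>] unfolding K_def[symmetric] K by simp
  hence "card {i. i < M \<and> r i \<noteq> 0} \<le> 2 * L" by (rule card_squeezing_le[OF U V B])
  moreover have "K = bogo_comp (lin_opt M U) (bogo_comp (squeezer M r) (lin_opt M V))"
    unfolding K A B using U V by (simp add: bogo_comp_bloch_messiah unitary_matD)
  ultimately show ?thesis using U V unfolding K_def by blast
qed

end
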